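(* Let $T$ be a $\delta$-Jordan Lie supertriple system and $N:T\to T$ a Nijenhuis operator for $T$. Define $$\psi(x_1,x_2,x_3)=(-1)^{|x_1|(|x_2|+|x_3|)}\theta(x_2,x_3)Nx_1-\delta(-1)^{|x_2||x_3|}\theta(x_1,x_3)Nx_2+\delta D(x_1,x_2)Nx_3-N[x_1,x_2,x_3].$$ Then $[x_1,x_2,x_3]_\lambda=[x_1,x_2,x_3]+\lambda\psi(x_1,x_2,x_3)$ ($\lambda$ a formal variable) defines a deformation of $T$, i.e. $T$ with $[\cdot,\cdot,\cdot]_\lambda$ is a $\delta$-Jordan Lie supertriple system, and this deformation is trivial.
   Context: A $\delta$-Jordan Lie supertriple system ($\delta\in\{1,-1\}$) is a $\mathbb{Z}_2$-graded vector space $T$ with a trilinear product $[\cdot,\cdot,\cdot]$ such that, for all homogeneous $a,b,c,d,e$ (with $|a|$ the degree of $a$): $|[a,b,c]|=|a|+|b|+|c|$; $[b,a,c]=-\delta(-1)^{|a||b|}[a,b,c]$; $(-1)^{|a||c|}[a,b,c]+(-1)^{|b||a|}[b,c,a]+(-1)^{|c||b|}[c,a,b]=0$; and $[a,b,[c,d,e]]=[[a,b,c],d,e]+(-1)^{|c|(|a|+|b|)}[c,[a,b,d],e]+\delta(-1)^{(|a|+|b|)(|c|+|d|)}[c,d,[a,b,e]]$. Here $\theta(a,b)(x)=(-1)^{|x|(|a|+|b|)}[x,a,b]$ and $D(a,b)(x)=\delta[a,b,x]$ (the adjoint representation). A linear operator $N:T\to T$ is a Nijenhuis operator if for all $x_1,x_2,x_3\in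 T$: $[Nx_1,Nx_2,Nx_3]=0$ and $N^2[x_1,x_2,x_3]=N[Nx_1,x_2,x_3]+N[x_1,Nx_2,x_3]+N[x_1,x_2,Nx_3]-[Nx_1,Nx_2,x_3]-[x_1,Nx_2,Nx_3]-[Nx_1,x_2,Nx_3]$. A deformation $[\cdot,\cdot,\cdot]_\lambda$ is trivial if there is a linear map $N':T\to T$ such that for all $\lambda$, $\varphi_\lambda=id+\lambda N'$ satisfies $\varphi_\lambda[x_1,x_2,x_3]_\lambda=[\varphi_\lambda x_1,\varphi_\lambda x_2,\varphi_\lambda x_3]$ for all $x_1,x_2,x_3\in T$. *)

theory Defs
  imports Main "HOL.Vector_Spaces"
begin

text \<open>A Z2-graded vector space over the field 'k is modelled by a vector space
  structure scale on the type 'v together with two subspaces T0 (even part) and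
  T1 (odd part) such that the whole space is their direct sum.
  Degrees are natural numbers taken modulo 2.\<close>

definition lin_subspace :: "('k::field \<Rightarrow> 'v::ab_group_add \<Rightarrow> 'v) \<Rightarrow> 'v set \<Rightarrow> bool" where
  "lin_subspace scale S \<longleftrightarrow> 0 \<in> S \<and> (\<forall>x\<in>S. \<forall>y\<in>S. x + y \<in> S) \<and> (\<forall>c. \<forall>x\<in>S. scale c x \<in> S)"

definition graded_space :: "('k::field \<Rightarrow> 'v::ab_group_add \<Rightarrow> 'v) \<Rightarrow> 'v set \<Rightarrow> 'v set \<Rightarrow> bool" where
  "graded_space scale T0 T1 \<longleftrightarrow>
     vector_space scale \<and> lin_subspace scale T0 \<and> lin_subspace scale T1 \<and>
     T0 \<inter> T1 = {0} \<and> (\<forall>v. \<exists>a\<in>T0. \<exists>b\<in>T1. v = a + b)"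

definition gcomp :: "'v set \<Rightarrow> 'v set \<Rightarrow> nat \<Rightarrow> 'v set" where
  "gcomp T0 T1 d = (if even d then T0 else T1)"

definition gproj :: "'v::ab_group_add set \<Rightarrow> 'v set \<Rightarrow> nat \<Rightarrow> 'v \<Rightarrow> 'v" where
  "gproj T0 T1 d v = (THE a. a \<in> gcomp T0 T1 d \<and> v - a \<in> gcomp T0 T1 (Suc d))"

abbreviation sg :: "nat \<Rightarrow> 'k::field" where
  "sg n \<equiv> (-1) ^ n"

definition trilinear :: "('k::field \<Rightarrow> 'v::ab_group_add \<Rightarrow> 'v) \<Rightarrow> ('v \<Rightarrow> 'v \<Rightarrow> 'v \<Rightarrow> 'v) \<Rightarrow> bool" where
  "trilinear scale br \<longleftrightarrow>
     (\<forall>b c. Vector_Spaces.linear scale scale (\<lambda>a. br a b c)) \<and>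
     (\<forall>a c. Vector_Spaces.linear scale scale (\<lambda>b. br a b c)) \<and>
     (\<forall>a b. Vector_Spaces.linear scale scale (\<lambda>c. br a b c))"

definition JLSTS :: "('k::field \<Rightarrow> 'v::ab_group_add \<Rightarrow> 'v) \<Rightarrow> 'v set \<Rightarrow> 'v set \<Rightarrow> 'k
    \<Rightarrow> ('v \<Rightarrow> 'v \<Rightarrow> 'v \<Rightarrow> 'v) \<Rightarrow> bool" where
  "JLSTS scale T0 T1 \<delta> br \<longleftrightarrow>
     graded_space scale T0 T1 \<and> (\<delta> = 1 \<or> \<delta> = -1) \<and> trilinear scale br \<and>
     (\<forall>i j k a b c. a \<in> gcomp T0 T1 i \<longrightarrow> b \<in> gcomp T0 T1 j \<longrightarrow> c \<in> gcomp T0 T1 k \<longrightarrow>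
        br a b c \<in> gcomp T0 T1 (i + j + k) \<and>
        br b a c = - (\<delta> * sg (i * j)) *\<^sub>s br a b c \<and>
        (sg (i * k)) *\<^sub>s br a b c + (sg (j * i)) *\<^sub>s br b c a + (sg (k * j)) *\<^sub>s br c a b = 0) \<and>
     (\<forall>i j k l m a b c d e. a \<in> gcomp T0 T1 i \<longrightarrow> b \<in> gcomp T0 T1 j \<longrightarrow> c \<in> gcomp T0 T1 k \<longrightarrow>
        d \<in> gcomp T0 T1 l \<longrightarrow> e \<in> gcomp T0 T1 m \<longrightarrow>
        br a b (br c d e) = br (br a b c) d e + (sg (k * (i + j))) *\<^sub>s br c (br a b d) e
          + (\<delta> * sg ((i + j) * (k + l))) *\<^sub>s br c d (br a b e))"
  for scale (infixr "*\<^sub>s" 75)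

definition nijenhuis :: "('k::field \<Rightarrow> 'v::ab_group_add \<Rightarrow> 'v) \<Rightarrow> ('v \<Rightarrow> 'v \<Rightarrow> 'v \<Rightarrow> 'v) \<Rightarrow> ('v \<Rightarrow> 'v) \<Rightarrow> bool" where
  "nijenhuis scale br N \<longleftrightarrow> Vector_Spaces.linear scale scale N \<and>
     (\<forall>x1 x2 x3. br (N x1) (N x2) (N x3) = 0 \<and>
        N (N (br x1 x2 x3)) = N (br (N x1) x2 x3) + N (br x1 (N x2) x3) + N (br x1 x2 (N x3))
          - br (N x1) (N x2) x3 - br x1 (N x2) (N x3) - br (N x1) x2 (N x3))"

definition theta_op :: "('k::field \<Rightarrow> 'v::ab_group_add \<Rightarrow> 'v) \<Rightarrow> ('v \<Rightarrow> 'v \<Rightarrow> 'v \<Rightarrow> 'v)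
    \<Rightarrow> nat \<Rightarrow> nat \<Rightarrow> 'v \<Rightarrow> 'v \<Rightarrow> nat \<Rightarrow> 'v \<Rightarrow> 'v" where
  "theta_op scale br da db a b dx x = scale (sg (dx * (da + db))) (br x a b)"

definition D_op :: "('k::field \<Rightarrow> 'v::ab_group_add \<Rightarrow> 'v) \<Rightarrow> 'k \<Rightarrow> ('v \<Rightarrow> 'v \<Rightarrow> 'v \<Rightarrow> 'v)
    \<Rightarrow> 'v \<Rightarrow> 'v \<Rightarrow> 'v \<Rightarrow> 'v" where
  "D_op scale \<delta> br a b x = scale \<delta> (br a b x)"

text \<open>psi on homogeneous x1,x2,x3 of degrees i,j,k (N is an even operator, so N xr has
  the same degree as xr).\<close>
definition psi_hom :: "('k::field \<Rightarrow> 'v::ab_group_add \<Rightarrow> 'v) \<Rightarrow> 'k \<Rightarrow> ('v \<Rightarrow> 'v \<Rightarrow> 'v \<Rightarrow> 'v)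
    \<Rightarrow> ('v \<Rightarrow> 'v) \<Rightarrow> nat \<Rightarrow> nat \<Rightarrow> nat \<Rightarrow> 'v \<Rightarrow> 'v \<Rightarrow> 'v \<Rightarrow> 'v" where
  "psi_hom scale \<delta> br N i j k x1 x2 x3 =
     scale (sg (i * (j + k))) (theta_op scale br j k x2 x3 i (N x1))
     - scale (\<delta> * sg (j * k)) (theta_op scale br i k x1 x3 j (N x2))
     + scale \<delta> (D_op scale \<delta> br x1 x2 (N x3))
     - N (br x1 x2 x3)"

definition psi :: "('k::field \<Rightarrow> 'v::ab_group_add \<Rightarrow> 'v) \<Rightarrow> 'v set \<Rightarrow> 'v set \<Rightarrow> 'k
    \<Rightarrow> ('v \<Rightarrow> 'v \<Rightarrow> 'v \<Rightarrow> 'v) \<Rightarrow> ('v \<Rightarrow> 'v) \<Rightarrow> 'v \<Rightarrow> 'v \<Rightarrow> 'v \<Rightarrow> 'v" where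
  "psi scale T0 T1 \<delta> br N x1 x2 x3 =
     (\<Sum>i\<in>{0,1::nat}. \<Sum>j\<in>{0,1::nat}. \<Sum>k\<in>{0,1::nat}.
        psi_hom scale \<delta> br N i j k (gproj T0 T1 i x1) (gproj T0 T1 j x2) (gproj T0 T1 k x3))"

definition deformed :: "('k::field \<Rightarrow> 'v::ab_group_add \<Rightarrow> 'v) \<Rightarrow> 'v set \<Rightarrow> 'v set \<Rightarrow> 'k
    \<Rightarrow> ('v \<Rightarrow> 'v \<Rightarrow> 'v \<Rightarrow> 'v) \<Rightarrow> ('v \<Rightarrow> 'v) \<Rightarrow> 'k \<Rightarrow> 'v \<Rightarrow> 'v \<Rightarrow> 'v \<Rightarrow> 'v" where
  "deformed scale T0 T1 \<delta> br N lam x1 x2 x3 =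
     br x1 x2 x3 + scale lam (psi scale T0 T1 \<delta> br N x1 x2 x3)"

definition trivial_deformation :: "('k::field \<Rightarrow> 'v::ab_group_add \<Rightarrow> 'v)
    \<Rightarrow> ('v \<Rightarrow> 'v \<Rightarrow> 'v \<Rightarrow> 'v) \<Rightarrow> ('k \<Rightarrow> 'v \<Rightarrow> 'v \<Rightarrow> 'v \<Rightarrow> 'v) \<Rightarrow> bool" where
  "trivial_deformation scale br brl \<longleftrightarrow>
     (\<exists>N'. Vector_Spaces.linear scale scale N' \<and>
        (\<forall>lam x1 x2 x3. let \<phi> = (\<lambda>x. x + scale lam (N' x)) in
           \<phi> (brl lam x1 x2 x3) = br (\<phi> x1) (\<phi> x2) (\<phi> x3)))"

end

theory Submission
  imports Defs
begin

text \<open>Since N is even, the signs in psi cancel against the super skew-symmetry of the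
  bracket, and psi is simply the bracket [x,y,z]_N = [Nx,y,z] + [x,Ny,z] + [x,y,Nz] - N[x,y,z].
  The fundamental identity for [-,-,-] + \<lambda>[-,-,-]_N splits into its coefficients at
  \<lambda> and \<lambda>^2. Trilinearity alone expresses the \<lambda>-coefficient as a sum of instances of the
  fundamental identity of [-,-,-] with one argument replaced by its image under N,
  minus N applied to an instance; the Nijenhuis condition on N[-,-,-]_N does the same
  for the \<lambda>^2-coefficient up to N applied to the \<lambda>-coefficient. Skew-symmetry and the
  cyclic identity are linear, hence pass to [-,-,-]_N directly. Triviality is witnessed
  by N' = N: expanding (id + \<lambda>N) of the deformed bracket, the \<lambda>^2- and \<lambda>^3-terms are the
  two Nijenhuis conditions.\<close>

definition bracket_N :: "('v::ab_group_add \<Rightarrow> 'v \<Rightarrow> 'v \<Rightarrow> 'v) \<Rightarrow> ('v \<Rightarrow> 'v) \<Rightarrow> 'v \<Rightarrow> 'v \<Rightarrow> 'v \<Rightarrow> 'v"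
  where "bracket_N br N x y z = br (N x) y z + br x (N y) z + br x y (N z) - N (br x y z)"

definition fi_defect :: "('k::field \<Rightarrow> 'v::ab_group_add \<Rightarrow> 'v) \<Rightarrow> 'k
    \<Rightarrow> ('v \<Rightarrow> 'v \<Rightarrow> 'v \<Rightarrow> 'v) \<Rightarrow> ('v \<Rightarrow> 'v \<Rightarrow> 'v \<Rightarrow> 'v)
    \<Rightarrow> nat \<Rightarrow> nat \<Rightarrow> nat \<Rightarrow> nat \<Rightarrow> 'v \<Rightarrow> 'v \<Rightarrow> 'v \<Rightarrow> 'v \<Rightarrow> 'v \<Rightarrow> 'v"
  where "fi_defect scale \<delta> X Y i j k l a b c d e =
    X a b (Y c d e) - X (Y a b c) d e - scale (sg (k * (i + j))) (X c (Y a b d) e)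
      - scale (\<delta> * sg ((i + j) * (k + l))) (X c d (Y a b e))"

lemma sg_mult_self: "(sg n :: 'k::field) * sg n = 1"
  by (simp add: power_add[symmetric] power_mult[symmetric])

lemma sg_triple_product_eq_1: "(sg (j * k) :: 'k::field) * sg (j * (i + k)) * sg (i * j) = 1"
proof -
  have "(sg (j * k) :: 'k) * sg (j * (i + k)) * sg (i * j) = sg (2 * (j * k + i * j))"
    by (simp add: power_add[symmetric] algebra_simps)
  also have "\<dots> = 1" by (simp add: power_mult)
  finally show ?thesis .
qed

section \<open>Identities for a trilinear bracket and a linear operator\<close>

context
  fixes scale :: "'k::field \<Rightarrow> 'v::ab_group_add \<Rightarrow> 'v" (infixr "*s" 75)
    and \<delta> :: 'k and br :: "'v \<Rightarrow> 'v \<Rightarrow> 'v \<Rightarrow> 'v" and N :: "'v \<Rightarrow> 'v"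
  assumes br_trilinear: "trilinear scale br"
    and N_linear: "Vector_Spaces.linear scale scale N"
begin

lemma trilinear_module_hom:
  "module_hom scale scale (\<lambda>a. br a b c)" "module_hom scale scale (\<lambda>a. br b a c)"
  "module_hom scale scale (\<lambda>a. br b c a)" "module_hom scale scale N"
  using br_trilinear N_linear unfolding trilinear_def module_hom_iff_linear by blast+

lemmas trilinear_simps =
  trilinear_module_hom[THEN module_hom.add] trilinear_module_hom[THEN module_hom.diff]
  trilinear_module_hom[THEN module_hom.neg] trilinear_module_hom[THEN module_hom.scale]
  trilinear_module_hom[THEN module_hom.zero]

interpretation vector_space scale
  using N_linear by (simp add: linear_iff)

lemma bracket_N_trilinear: "trilinear scale (bracket_N br N)"
  unfolding trilinear_def linear_iff bracket_N_def
  by (simp add: vector_space_axioms trilinear_simps algebra_simps)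

lemma fi_defect_linear_term:
  "fi_defect scale \<delta> br (bracket_N br N) i j k l a b c d e
     + fi_defect scale \<delta> (bracket_N br N) br i j k l a b c d e =
   fi_defect scale \<delta> br br i j k l (N a) b c d e + fi_defect scale \<delta> br br i j k l a (N b) c d e
   + fi_defect scale \<delta> br br i j k l a b (N c) d e + fi_defect scale \<delta> br br i j k l a b c (N d) e
   + fi_defect scale \<delta> br br i j k l a b c d (N e) - N (fi_defect scale \<delta> br br i j k l a b c d e)"
  unfolding fi_defect_def bracket_N_def by (simp add: trilinear_simps algebra_simps)

lemma fi_defect_quadratic_term:
  assumes "nijenhuis scale br N"
  shows "fi_defect scale \<delta> (bracket_N br N) (bracket_N br N) i j k l a b c d e
   + N (fi_defect scale \<delta> br (bracket_N br N) i j k l a b c d e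
        + fi_defect scale \<delta> (bracket_N br N) br i j k l a b c d e) =
   fi_defect scale \<delta> br br i j k l (N a) (N b) c d e + fi_defect scale \<delta> br br i j k l (N a) b (N c) d e
   + fi_defect scale \<delta> br br i j k l (N a) b c (N d) e + fi_defect scale \<delta> br br i j k l (N a) b c d (N e)
   + fi_defect scale \<delta> br br i j k l a (N b) (N c) d e + fi_defect scale \<delta> br br i j k l a (N b) c (N d) e
   + fi_defect scale \<delta> br br i j k l a (N b) c d (N e) + fi_defect scale \<delta> br br i j k l a b (N c) (N d) e
   + fi_defect scale \<delta> br br i j k l a b (N c) d (N e) + fi_defect scale \<delta> br br i j k l a b c (N d) (N e)"
proof -
  have nij: "N (N (br x y z)) = N (br (N x) y z) + N (br x (N y) z) + N (br x y (N z))
      - br (N x) (N y) z - br x (N y) (N z) - br (N x) y (N z)" for x y z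
    using assms unfolding nijenhuis_def by blast
  show ?thesis
    unfolding fi_defect_def bracket_N_def by (simp add: nij trilinear_simps algebra_simps)
qed

lemma fi_defect_deformation:
  "fi_defect scale \<delta> (\<lambda>x y z. br x y z + lam *s bracket_N br N x y z)
     (\<lambda>x y z. br x y z + lam *s bracket_N br N x y z) i j k l a b c d e
   = fi_defect scale \<delta> br br i j k l a b c d e
     + lam *s (fi_defect scale \<delta> br (bracket_N br N) i j k l a b c d e
               + fi_defect scale \<delta> (bracket_N br N) br i j k l a b c d e)
     + (lam * lam) *s fi_defect scale \<delta> (bracket_N br N) (bracket_N br N) i j k l a b c d e"
  unfolding fi_defect_def bracket_N_def by (simp add: trilinear_simps algebra_simps)

lemma nijenhuis_deformation_conjugate:
  assumes "nijenhuis scale br N"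
  shows "let \<phi> = (\<lambda>x. x + lam *s N x) in
    \<phi> (br x y z + lam *s bracket_N br N x y z) = br (\<phi> x) (\<phi> y) (\<phi> z)"
proof -
  have "br (N x) (N y) (N z) = 0"
    and nij: "N (N (br x y z)) = N (br (N x) y z) + N (br x (N y) z) + N (br x y (N z))
      - br (N x) (N y) z - br x (N y) (N z) - br (N x) y (N z)"
    using assms unfolding nijenhuis_def by blast+
  then show ?thesis
    unfolding Let_def bracket_N_def by (simp add: nij trilinear_simps algebra_simps)
qed

end

section \<open>Homogeneous components\<close>

context
  fixes scale :: "'k::field \<Rightarrow> 'v::ab_group_add \<Rightarrow> 'v" (infixr "*s" 75)
    and T0 T1 :: "'v set"
  assumes graded: "graded_space scale T0 T1"
begin

interpretation vector_space scale
  using graded unfolding graded_space_def by blast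

lemma gcomp_add: "x \<in> gcomp T0 T1 d \<Longrightarrow> y \<in> gcomp T0 T1 d \<Longrightarrow> x + y \<in> gcomp T0 T1 d"
  and gcomp_scale: "x \<in> gcomp T0 T1 d \<Longrightarrow> c *s x \<in> gcomp T0 T1 d"
  using graded unfolding graded_space_def gcomp_def lin_subspace_def by auto

lemma gcomp_diff: "x \<in> gcomp T0 T1 d \<Longrightarrow> y \<in> gcomp T0 T1 d \<Longrightarrow> x - y \<in> gcomp T0 T1 d"
  using gcomp_add[of x d "(-1) *s y"] gcomp_scale[of y d "-1"] by simp

lemma gproj_eqI:
  assumes "a \<in> gcomp T0 T1 d" "v - a \<in> gcomp T0 T1 (Suc d)"
  shows "gproj T0 T1 d v = a"
  unfolding gproj_def
proof (rule the_equality)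
  show "a \<in> gcomp T0 T1 d \<and> v - a \<in> gcomp T0 T1 (Suc d)" using assms by blast
next
  fix a' assume a': "a' \<in> gcomp T0 T1 d \<and> v - a' \<in> gcomp T0 T1 (Suc d)"
  have "a' - a \<in> gcomp T0 T1 d" and "(v - a) - (v - a') \<in> gcomp T0 T1 (Suc d)"
    using a' assms by (blast intro: gcomp_diff)+
  then have "a' - a \<in> T0 \<inter> T1" unfolding gcomp_def by (cases "even d") auto
  with graded have "a' - a = 0" unfolding graded_space_def by blast
  then show "a' = a" by simp
qed

lemma graded_decomposition:
  obtains a b where "a \<in> T0" "b \<in> T1" "gproj T0 T1 0 v = a" "gproj T0 T1 1 v = b" "v = a + b"
proof -
  obtain a b where ab: "a \<in> T0" "b \<in> T1" "v = a + b"
    using graded unfolding graded_space_def by blast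
  have "gproj T0 T1 0 v = a" "gproj T0 T1 1 v = b"
    by (rule gproj_eqI; use ab in \<open>simp add: gcomp_def\<close>)+
  with ab that show ?thesis by blast
qed

end

section \<open>Deformation by an even Nijenhuis operator\<close>

context
  fixes scale :: "'k::field \<Rightarrow> 'v::ab_group_add \<Rightarrow> 'v" (infixr "*s" 75)
    and T0 T1 :: "'v set" and \<delta> :: 'k
    and br :: "'v \<Rightarrow> 'v \<Rightarrow> 'v \<Rightarrow> 'v" and N :: "'v \<Rightarrow> 'v"
  assumes jlsts: "JLSTS scale T0 T1 \<delta> br" and nijenhuis: "nijenhuis scale br N"
    and N_T0: "N ` T0 \<subseteq> T0" and N_T1: "N ` T1 \<subseteq> T1"
begin

private lemma graded: "graded_space scale T0 T1"
  and delta_cases: "\<delta> = 1 \<or> \<delta> = -1"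
  and br_trilinear: "trilinear scale br"
  and N_linear: "Vector_Spaces.linear scale scale N"
  using jlsts nijenhuis unfolding JLSTS_def nijenhuis_def by blast+

interpretation vector_space scale
  using graded unfolding graded_space_def by blast

private lemma br_gcomp:
  assumes "a \<in> gcomp T0 T1 i" "b \<in> gcomp T0 T1 j" "c \<in> gcomp T0 T1 k"
  shows "br a b c \<in> gcomp T0 T1 (i + j + k)"
    and "br b a c = - (\<delta> * sg (i * j)) *s br a b c"
    and "sg (i * k) *s br a b c + sg (j * i) *s br b c a + sg (k * j) *s br c a b = 0"
  using jlsts assms unfolding JLSTS_def by blast+

private lemma fi_defect_br:
  assumes "a \<in> gcomp T0 T1 i" "b \<in> gcomp T0 T1 j" "c \<in> gcomp T0 T1 k"
    "d \<in> gcomp T0 T1 l" "e \<in> gcomp T0 T1 m"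
  shows "fi_defect scale \<delta> br br i j k l a b c d e = 0"
proof -
  have "br a b (br c d e) = br (br a b c) d e + sg (k * (i + j)) *s br c (br a b d) e
      + (\<delta> * sg ((i + j) * (k + l))) *s br c d (br a b e)"
    using jlsts assms unfolding JLSTS_def by blast
  then show ?thesis unfolding fi_defect_def by (simp add: algebra_simps)
qed

private lemma N_gcomp: "x \<in> gcomp T0 T1 d \<Longrightarrow> N x \<in> gcomp T0 T1 d"
  using N_T0 N_T1 unfolding gcomp_def by auto

private lemmas br_linear_simps =
  trilinear_simps[OF br_trilinear N_linear]

lemma psi_hom_eq_bracket_N:
  assumes "a \<in> gcomp T0 T1 i" "b \<in> gcomp T0 T1 j" "c \<in> gcomp T0 T1 k"
  shows "psi_hom scale \<delta> br N i j k a b c = bracket_N br N a b c"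
proof -
  have delta_sq: "\<delta> * \<delta> = 1" using delta_cases by auto
  have swap: "br (N b) a c = - (\<delta> * sg (i * j)) *s br a (N b) c"
    using br_gcomp(2)[OF assms(1) N_gcomp[OF assms(2)] assms(3)] .
  have "(\<delta> * sg (j * k)) * (sg (j * (i + k)) * (\<delta> * sg (i * j)))
      = (\<delta> * \<delta>) * (sg (j * k) * sg (j * (i + k)) * sg (i * j))"
    by (simp only: mult_ac)
  also have "\<dots> = 1" by (simp only: delta_sq sg_triple_product_eq_1 mult_1_left)
  finally have signs: "(\<delta> * sg (j * k)) * (sg (j * (i + k)) * (\<delta> * sg (i * j))) = 1" .
  have "sg (i * (j + k)) *s (sg (i * (j + k)) *s br (N a) b c) = br (N a) b c"
    by (simp only: scale_scale sg_mult_self scale_one)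
  moreover have "(\<delta> * sg (j * k)) *s (sg (j * (i + k)) *s br (N b) a c) = - br a (N b) c"
    unfolding swap by (simp only: scale_scale scale_minus_left scale_minus_right signs scale_one)
  moreover have "\<delta> *s (\<delta> *s br a b (N c)) = br a b (N c)"
    by (simp only: scale_scale delta_sq scale_one)
  ultimately show ?thesis
    unfolding psi_hom_def theta_op_def D_op_def bracket_N_def by (simp only: diff_minus_eq_add)
qed

lemma psi_eq_bracket_N: "psi scale T0 T1 \<delta> br N x y z = bracket_N br N x y z"
proof -
  obtain x0 x1 where x: "x0 \<in> T0" "x1 \<in> T1" "gproj T0 T1 0 x = x0" "gproj T0 T1 1 x = x1" "x = x0 + x1"
    using graded_decomposition[OF graded] .
  obtain y0 y1 where y: "y0 \<in> T0" "y1 \<in> T1" "gproj T0 T1 0 y = y0" "gproj T0 T1 1 y = y1" "y = y0 + y1"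
    using graded_decomposition[OF graded] .
  obtain z0 z1 where z: "z0 \<in> T0" "z1 \<in> T1" "gproj T0 T1 0 z = z0" "gproj T0 T1 1 z = z1" "z = z0 + z1"
    using graded_decomposition[OF graded] .
  have "gcomp T0 T1 0 = T0" "gcomp T0 T1 (Suc 0) = T1"
    by (simp_all add: gcomp_def)
  with x y z have "psi scale T0 T1 \<delta> br N x y z =
      bracket_N br N x0 y0 z0 + bracket_N br N x0 y0 z1 + bracket_N br N x0 y1 z0
    + bracket_N br N x0 y1 z1 + bracket_N br N x1 y0 z0 + bracket_N br N x1 y0 z1
    + bracket_N br N x1 y1 z0 + bracket_N br N x1 y1 z1"
    unfolding psi_def by (simp add: psi_hom_eq_bracket_N)
  also have "\<dots> = bracket_N br N x y z"
    unfolding x(5) y(5) z(5) bracket_N_def by (simp add: br_linear_simps algebra_simps)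
  finally show ?thesis .
qed

lemma deformed_eq: "deformed scale T0 T1 \<delta> br N lam = (\<lambda>x y z. br x y z + lam *s bracket_N br N x y z)"
  by (intro ext) (simp add: deformed_def psi_eq_bracket_N)

lemma bracket_N_gcomp:
  assumes "a \<in> gcomp T0 T1 i" "b \<in> gcomp T0 T1 j" "c \<in> gcomp T0 T1 k"
  shows "bracket_N br N a b c \<in> gcomp T0 T1 (i + j + k)"
  unfolding bracket_N_def
  by (intro gcomp_add[OF graded] gcomp_diff[OF graded] N_gcomp br_gcomp(1) assms)

lemma bracket_N_swap:
  assumes "a \<in> gcomp T0 T1 i" "b \<in> gcomp T0 T1 j" "c \<in> gcomp T0 T1 k"
  shows "bracket_N br N b a c = - (\<delta> * sg (i * j)) *s bracket_N br N a b c"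
  unfolding bracket_N_def
  using br_gcomp(2)[OF assms] br_gcomp(2)[OF assms(1) N_gcomp[OF assms(2)] assms(3)]
    br_gcomp(2)[OF N_gcomp[OF assms(1)] assms(2,3)] br_gcomp(2)[OF assms(1,2) N_gcomp[OF assms(3)]]
  by (simp add: br_linear_simps algebra_simps)

lemma bracket_N_cyclic:
  assumes "a \<in> gcomp T0 T1 i" "b \<in> gcomp T0 T1 j" "c \<in> gcomp T0 T1 k"
  shows "sg (i * k) *s bracket_N br N a b c + sg (j * i) *s bracket_N br N b c a
    + sg (k * j) *s bracket_N br N c a b = 0"
proof -
  let ?C = "\<lambda>x y z. sg (i * k) *s br x y z + sg (j * i) *s br y z x + sg (k * j) *s br z x y"
  have "sg (i * k) *s bracket_N br N a b c + sg (j * i) *s bracket_N br N b c a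
      + sg (k * j) *s bracket_N br N c a b
      = ?C (N a) b c + ?C a (N b) c + ?C a b (N c) - N (?C a b c)"
    unfolding bracket_N_def by (simp add: br_linear_simps algebra_simps)
  also have "\<dots> = 0"
    using br_gcomp(3)[OF assms] br_gcomp(3)[OF N_gcomp[OF assms(1)] assms(2,3)]
      br_gcomp(3)[OF assms(1) N_gcomp[OF assms(2)] assms(3)]
      br_gcomp(3)[OF assms(1,2) N_gcomp[OF assms(3)]]
    by (simp add: br_linear_simps)
  finally show ?thesis .
qed

lemma fi_defect_deformation_zero:
  assumes "a \<in> gcomp T0 T1 i" "b \<in> gcomp T0 T1 j" "c \<in> gcomp T0 T1 k"
    "d \<in> gcomp T0 T1 l" "e \<in> gcomp T0 T1 m"
  shows "fi_defect scale \<delta> (\<lambda>x y z. br x y z + lam *s bracket_N br N x y z)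
    (\<lambda>x y z. br x y z + lam *s bracket_N br N x y z) i j k l a b c d e = 0"
proof -
  note homogeneous = assms N_gcomp[OF assms(1)] N_gcomp[OF assms(2)] N_gcomp[OF assms(3)]
    N_gcomp[OF assms(4)] N_gcomp[OF assms(5)]
  have linear_term: "fi_defect scale \<delta> br (bracket_N br N) i j k l a b c d e
      + fi_defect scale \<delta> (bracket_N br N) br i j k l a b c d e = 0"
    unfolding fi_defect_linear_term[OF br_trilinear N_linear]
    using homogeneous by (simp add: fi_defect_br[of _ i _ j _ k _ l _ m] br_linear_simps)
  have "fi_defect scale \<delta> (bracket_N br N) (bracket_N br N) i j k l a b c d e = 0"
    using fi_defect_quadratic_term[OF br_trilinear N_linear nijenhuis, of \<delta> i j k l a b c d e]
    unfolding linear_term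
    using homogeneous by (simp add: fi_defect_br[of _ i _ j _ k _ l _ m] br_linear_simps)
  with linear_term fi_defect_br[OF assms] show ?thesis
    unfolding fi_defect_deformation[OF br_trilinear N_linear] by simp
qed

lemma deformed_JLSTS: "JLSTS scale T0 T1 \<delta> (deformed scale T0 T1 \<delta> br N lam)"
proof -
  let ?D = "\<lambda>x y z. br x y z + lam *s bracket_N br N x y z"
  have "trilinear scale ?D"
    using br_trilinear bracket_N_trilinear[OF br_trilinear N_linear]
    unfolding trilinear_def linear_iff by (simp add: scale_right_distrib)
  moreover have "?D a b c \<in> gcomp T0 T1 (i + j + k) \<and>
      ?D b a c = - (\<delta> * sg (i * j)) *s ?D a b c \<and>
      sg (i * k) *s ?D a b c + sg (j * i) *s ?D b c a + sg (k * j) *s ?D c a b = 0"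
    if "a \<in> gcomp T0 T1 i" "b \<in> gcomp T0 T1 j" "c \<in> gcomp T0 T1 k" for i j k a b c
  proof (intro conjI)
    show "?D a b c \<in> gcomp T0 T1 (i + j + k)"
      using br_gcomp(1)[OF that] bracket_N_gcomp[OF that]
      by (intro gcomp_add[OF graded] gcomp_scale[OF graded])
    show "?D b a c = - (\<delta> * sg (i * j)) *s ?D a b c"
      using br_gcomp(2)[OF that] bracket_N_swap[OF that] by (simp add: algebra_simps)
    have "sg (i * k) *s ?D a b c + sg (j * i) *s ?D b c a + sg (k * j) *s ?D c a b
      = (sg (i * k) *s br a b c + sg (j * i) *s br b c a + sg (k * j) *s br c a b)
        + lam *s (sg (i * k) *s bracket_N br N a b c + sg (j * i) *s bracket_N br N b c a
          + sg (k * j) *s bracket_N br N c a b)"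
      by (simp add: algebra_simps)
    then show "sg (i * k) *s ?D a b c + sg (j * i) *s ?D b c a + sg (k * j) *s ?D c a b = 0"
      using br_gcomp(3)[OF that] bracket_N_cyclic[OF that] by simp
  qed
  moreover have "?D a b (?D c d e) = ?D (?D a b c) d e + sg (k * (i + j)) *s ?D c (?D a b d) e
      + (\<delta> * sg ((i + j) * (k + l))) *s ?D c d (?D a b e)"
    if "a \<in> gcomp T0 T1 i" "b \<in> gcomp T0 T1 j" "c \<in> gcomp T0 T1 k"
      "d \<in> gcomp T0 T1 l" "e \<in> gcomp T0 T1 m" for i j k l m a b c d e
    using fi_defect_deformation_zero[OF that] unfolding fi_defect_def by (simp add: algebra_simps)
  ultimately show ?thesis
    unfolding deformed_eq JLSTS_def using graded delta_cases by blast
qed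

lemma deformed_trivial: "trivial_deformation scale br (deformed scale T0 T1 \<delta> br N)"
  unfolding trivial_deformation_def deformed_eq
  using N_linear nijenhuis_deformation_conjugate[OF br_trilinear N_linear nijenhuis] by blast

end

theorem theorem5p4:
  fixes scale :: "'k::field \<Rightarrow> 'v::ab_group_add \<Rightarrow> 'v"
    and T0 T1 :: "'v set" and \<delta> :: 'k
    and br :: "'v \<Rightarrow> 'v \<Rightarrow> 'v \<Rightarrow> 'v" and N :: "'v \<Rightarrow> 'v"
  assumes "JLSTS scale T0 T1 \<delta> br"
    and "nijenhuis scale br N"
    and "N ` T0 \<subseteq> T0" and "N ` T1 \<subseteq> T1"
  shows "(\<forall>lam. JLSTS scale T0 T1 \<delta> (deformed scale T0 T1 \<delta> br N lam))
       \<and> trivial_deformation scale br (deformed scale T0 T1 \<delta> br N)"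
  using deformed_JLSTS[OF assms] deformed_trivial[OF assms] by blast

end
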